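(* For all $P,Q\in\Gamma_n$, $$0\le M_{SG}(P\|Q)\le 2\,h(P\|Q)\qquad\text{and}\qquad 0\le \xi_{SG}(P\|Q)\le 2\,\xi_{h}(P\|Q).$$
   Context: $\Gamma_n=\{P=(p_1,\dots,p_n): p_i>0,\ \sum_i p_i=1\}$, $n\ge2$. For $f:(0,\infty)\to\mathbb{R}$, $C_f(P\|Q)=\sum_{i=1}^n q_i f(p_i/q_i)$; for differentiable $f$, $E_f(P\|Q)=\sum_{i=1}^n (p_i-q_i) f'(p_i/q_i)$ and $\xi_f=E_f-C_f$. With $f_{SG}(x)=\sqrt{(x^2+1)/2}-\sqrt x$ and $f_h(x)=\frac12(\sqrt x-1)^2$: $M_{SG}=C_{f_{SG}}=\sum_i\big(\sqrt{(p_i^2+q_i^2)/2}-\sqrt{p_iq_i}\big)$, $h=C_{f_h}=\frac12\sum_i(\sqrt{p_i}-\sqrt{q_i})^2$, $\xi_{SG}=\xi_{f_{SG}}$, $\xi_h=\xi_{f_h}$. *)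

theory Defs
  imports "HOL-Analysis.Analysis"
begin

definition Gamma :: "nat \<Rightarrow> (nat \<Rightarrow> real) set" where
  "Gamma n = {P. (\<forall>i<n. P i > 0) \<and> (\<Sum>i<n. P i) = 1}"

definition Cf :: "(real \<Rightarrow> real) \<Rightarrow> nat \<Rightarrow> (nat \<Rightarrow> real) \<Rightarrow> (nat \<Rightarrow> real) \<Rightarrow> real" where
  "Cf f n P Q = (\<Sum>i<n. Q i * f (P i / Q i))"

definition Ef :: "(real \<Rightarrow> real) \<Rightarrow> nat \<Rightarrow> (nat \<Rightarrow> real) \<Rightarrow> (nat \<Rightarrow> real) \<Rightarrow> real" where
  "Ef f n P Q = (\<Sum>i<n. (P i - Q i) * deriv f (P i / Q i))"

definition xi_f :: "(real \<Rightarrow> real) \<Rightarrow> nat \<Rightarrow> (nat \<Rightarrow> real) \<Rightarrow> (nat \<Rightarrow> real) \<Rightarrow> real" where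
  "xi_f f n P Q = Ef f n P Q - Cf f n P Q"

definition f_SG :: "real \<Rightarrow> real" where
  "f_SG x = sqrt ((x^2 + 1) / 2) - sqrt x"

definition f_h :: "real \<Rightarrow> real" where
  "f_h x = (1/2) * (sqrt x - 1)^2"

definition M_SG :: "nat \<Rightarrow> (nat \<Rightarrow> real) \<Rightarrow> (nat \<Rightarrow> real) \<Rightarrow> real" where
  "M_SG = Cf f_SG"

definition hel :: "nat \<Rightarrow> (nat \<Rightarrow> real) \<Rightarrow> (nat \<Rightarrow> real) \<Rightarrow> real" where
  "hel = Cf f_h"

definition xi_SG :: "nat \<Rightarrow> (nat \<Rightarrow> real) \<Rightarrow> (nat \<Rightarrow> real) \<Rightarrow> real" where
  "xi_SG = xi_f f_SG"

definition xi_h :: "nat \<Rightarrow> (nat \<Rightarrow> real) \<Rightarrow> (nat \<Rightarrow> real) \<Rightarrow> real" where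
  "xi_h = xi_f f_h"

end

theory Submission
  imports Defs
begin

text \<open>Since \<open>\<xi>\<^sub>f\<close> is itself the Csiszar divergence of \<open>g\<^sub>f(x) = (x - 1) f'(x) - f(x)\<close> and
  \<open>C\<^sub>f\<close> is monotone in \<open>f\<close>, both claims reduce to pointwise inequalities on \<open>(0, \<infinity>)\<close>.
  With \<open>t = \<surd>x\<close> and \<open>s = \<surd>((x\<^sup>2 + 1)/2)\<close> one has \<open>f\<^sub>S\<^sub>G = s - t\<close>, \<open>2 f\<^sub>h = (t - 1)\<^sup>2\<close>,
  \<open>g\<^bsub>f_SG\<^esub> = (x + 1)(s - t)/(2st)\<close> and \<open>2 g\<^bsub>f_h\<^esub> = (t - 1)\<^sup>2/t\<close>; the bounds then follow from
  \<open>t, (x + 1)/2 \<le> s \<le> x - t + 1\<close> and \<open>s - t = (t\<^sup>2 - 1)\<^sup>2/(2(s + t))\<close>.\<close>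

definition xi_kernel :: "(real \<Rightarrow> real) \<Rightarrow> real \<Rightarrow> real" where
  "xi_kernel f x = (x - 1) * deriv f x - f x"

lemma xi_f_eq_Cf_xi_kernel:
  assumes "\<And>i. i < n \<Longrightarrow> Q i \<noteq> 0"
  shows "xi_f f n P Q = Cf (xi_kernel f) n P Q"
proof -
  have "(P i - Q i) * deriv f (P i / Q i) - Q i * f (P i / Q i)
          = Q i * xi_kernel f (P i / Q i)" if "i < n" for i
    using assms[OF that] by (simp add: xi_kernel_def field_simps)
  then show ?thesis
    by (simp add: xi_f_def Ef_def Cf_def flip: sum_subtractf)
qed

lemma Cf_nonneg:
  assumes "\<And>x. x > 0 \<Longrightarrow> 0 \<le> f x"
    and "\<And>i. i < n \<Longrightarrow> P i > 0" "\<And>i. i < n \<Longrightarrow> Q i > 0"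
  shows "0 \<le> Cf f n P Q"
  unfolding Cf_def using assms by (intro sum_nonneg mult_nonneg_nonneg) (auto simp: less_imp_le)

lemma Cf_le_scaled:
  assumes "\<And>x. x > 0 \<Longrightarrow> f x \<le> c * g x"
    and "\<And>i. i < n \<Longrightarrow> P i > 0" "\<And>i. i < n \<Longrightarrow> Q i > 0"
  shows "Cf f n P Q \<le> c * Cf g n P Q"
  unfolding Cf_def sum_distrib_left
proof (rule sum_mono)
  fix i assume "i \<in> {..<n}"
  then have "Q i > 0" "P i / Q i > 0" using assms(2,3) by auto
  then show "Q i * f (P i / Q i) \<le> c * (Q i * g (P i / Q i))"
    using assms(1) by (simp add: mult.left_commute[of c] mult_left_mono)
qed

lemma sqrt_le_quadratic_mean:
  assumes "x \<ge> 0"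
  shows "sqrt x \<le> sqrt ((x\<^sup>2 + 1) / 2)"
  using sum_squares_ge_zero[of "x - 1" 0] by (simp add: power2_eq_square algebra_simps)

lemma arith_mean_le_quadratic_mean:
  fixes x :: real
  shows "(x + 1) / 2 \<le> sqrt ((x\<^sup>2 + 1) / 2)"
  using sum_squares_ge_zero[of "x - 1" 0]
  by (intro real_le_rsqrt) (simp add: power2_eq_square field_simps)

lemma quadratic_mean_le:
  assumes "x \<ge> 0"
  shows "sqrt ((x\<^sup>2 + 1) / 2) \<le> x - sqrt x + 1"
proof -
  define t where "t = sqrt x"
  have x: "x = t\<^sup>2" and t_nonneg: "t \<ge> 0" using assms by (auto simp: t_def)
  have "(t\<^sup>2 - t + 1)\<^sup>2 - (x\<^sup>2 + 1) / 2 = ((t - 1)\<^sup>2)\<^sup>2 / 2"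
    by (simp add: x power2_eq_square algebra_simps)
  then have "(x\<^sup>2 + 1) / 2 \<le> (t\<^sup>2 - t + 1)\<^sup>2"
    using zero_le_power2[of "(t - 1)\<^sup>2"] by linarith
  moreover have "t\<^sup>2 - t + 1 \<ge> 0"
    using sum_squares_ge_zero[of "t - 1/2" 0] by (simp add: power2_eq_square algebra_simps)
  ultimately have "sqrt ((x\<^sup>2 + 1) / 2) \<le> t\<^sup>2 - t + 1"
    by (simp add: real_le_lsqrt)
  then show ?thesis by (simp add: x t_def[symmetric] t_nonneg)
qed

lemma deriv_f_SG:
  assumes "x > 0"
  shows "deriv f_SG x = x / (2 * sqrt ((x\<^sup>2 + 1) / 2)) - 1 / (2 * sqrt x)"
proof -
  have "(x\<^sup>2 + 1) / 2 > 0" by (simp add: add_nonneg_pos)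
  then have "(f_SG has_real_derivative
      inverse (sqrt ((x\<^sup>2 + 1) / 2)) / 2 * (2 * x / 2) - inverse (sqrt x) / 2) (at x)"
    unfolding f_SG_def[abs_def] using assms
    by (auto intro!: derivative_eq_intros)
  then show ?thesis by (simp add: DERIV_imp_deriv field_simps)
qed

lemma deriv_f_h:
  assumes "x > 0"
  shows "deriv f_h x = 1/2 - 1 / (2 * sqrt x)"
proof -
  have "(f_h has_real_derivative 1/2 * (2 * (sqrt x - 1) * (inverse (sqrt x) / 2))) (at x)"
    unfolding f_h_def[abs_def] using assms by (auto intro!: derivative_eq_intros)
  then show ?thesis using assms by (simp add: DERIV_imp_deriv field_simps)
qed

lemma xi_kernel_f_SG:
  assumes "x > 0"
  defines "s \<equiv> sqrt ((x\<^sup>2 + 1) / 2)" and "t \<equiv> sqrt x"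
  shows "xi_kernel f_SG x = (x + 1) * (s - t) / (2 * s * t)"
proof -
  have t: "t > 0" "t * t = x" using assms(1) by (auto simp: t_def)
  have s: "s > 0" "2 * (s * s) = x\<^sup>2 + 1" by (auto simp: s_def add_nonneg_pos)
  have "xi_kernel f_SG x = (x - 1) * (x / (2 * s) - 1 / (2 * t)) - (s - t)"
    by (simp add: xi_kernel_def deriv_f_SG[OF assms(1)] f_SG_def s_def t_def)
  also have "\<dots> = ((x - 1) * x * t - (x - 1) * s - 2 * (s * s) * t + 2 * s * (t * t)) / (2 * s * t)"
    using s(1) t(1) by (simp add: field_simps)
  also have "\<dots> = (x + 1) * (s - t) / (2 * s * t)"
    unfolding s(2) t(2) by (simp add: algebra_simps power2_eq_square)
  finally show ?thesis .
qed

lemma xi_kernel_f_h: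
  assumes "x > 0"
  shows "xi_kernel f_h x = (sqrt x - 1)\<^sup>2 / (2 * sqrt x)"
  using assms unfolding xi_kernel_def deriv_f_h[OF assms] f_h_def
  by (simp add: field_simps power2_eq_square)

lemma f_SG_bounds:
  assumes "x > 0"
  shows "0 \<le> f_SG x" "f_SG x \<le> 2 * f_h x"
  using sqrt_le_quadratic_mean[of x] quadratic_mean_le[of x] assms
  by (simp_all add: f_SG_def f_h_def power2_eq_square algebra_simps)

lemma xi_kernel_f_SG_bounds:
  assumes "x > 0"
  shows "0 \<le> xi_kernel f_SG x" "xi_kernel f_SG x \<le> 2 * xi_kernel f_h x"
proof -
  define s where "s = sqrt ((x\<^sup>2 + 1) / 2)"
  define t where "t = sqrt x"
  have t: "t > 0" "x = t\<^sup>2" using assms by (auto simp: t_def)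
  have s_ge_t: "t \<le> s" using sqrt_le_quadratic_mean[of x] assms by (simp add: s_def t_def)
  have s_ge_mean: "(x + 1) / 2 \<le> s" using arith_mean_le_quadratic_mean by (simp add: s_def)
  have s: "s > 0" "s\<^sup>2 = (x\<^sup>2 + 1) / 2" using s_ge_t t by (auto simp: s_def add_nonneg_pos)
  have kernel_SG: "xi_kernel f_SG x = (x + 1) * (s - t) / (2 * s * t)"
    using xi_kernel_f_SG[OF assms] by (simp add: s_def t_def)
  then show "0 \<le> xi_kernel f_SG x" using s_ge_t s t by simp
  have "(x + 1) * (t + 1)\<^sup>2 \<le> 4 * s * (s + t)"
  proof -
    have "2 * t * (x + 1) \<le> 4 * s * t" using s_ge_mean t by simp
    then show ?thesis
      using s t zero_le_power2[of "x - 1"] by (simp add: power2_eq_square algebra_simps)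
  qed
  then have "(x + 1) * (t + 1)\<^sup>2 * (t - 1)\<^sup>2 \<le> 4 * s * (s + t) * (t - 1)\<^sup>2"
    by (rule mult_right_mono) simp
  then have "(x + 1) * ((t - 1)\<^sup>2 * (t + 1)\<^sup>2 / (2 * (s + t))) \<le> 2 * s * (t - 1)\<^sup>2"
    using s t by (simp add: field_simps)
  moreover have "s - t = (t - 1)\<^sup>2 * (t + 1)\<^sup>2 / (2 * (s + t))"
    using s t by (simp add: field_simps power2_eq_square)
  ultimately have key: "(x + 1) * (s - t) \<le> 2 * s * (t - 1)\<^sup>2" by simp
  have "xi_kernel f_SG x \<le> 2 * s * (t - 1)\<^sup>2 / (2 * s * t)"
    unfolding kernel_SG using key s t by (intro divide_right_mono) auto
  also have "\<dots> = 2 * xi_kernel f_h x"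
    using s(1) t(1) by (simp add: xi_kernel_f_h[OF assms] flip: t_def)
  finally show "xi_kernel f_SG x \<le> 2 * xi_kernel f_h x" .
qed

theorem proposition5p4:
  fixes n :: nat and P Q :: "nat \<Rightarrow> real"
  assumes "n \<ge> 2" and "P \<in> Gamma n" and "Q \<in> Gamma n"
  shows "0 \<le> M_SG n P Q \<and> M_SG n P Q \<le> 2 * hel n P Q \<and>
         0 \<le> xi_SG n P Q \<and> xi_SG n P Q \<le> 2 * xi_h n P Q"
proof -
  have P: "\<And>i. i < n \<Longrightarrow> P i > 0" and Q: "\<And>i. i < n \<Longrightarrow> Q i > 0"
    using assms(2,3) by (auto simp: Gamma_def)
  then have Q_nonzero: "\<And>i. i < n \<Longrightarrow> Q i \<noteq> 0" by fastforce
  have xi_SG: "xi_SG n P Q = Cf (xi_kernel f_SG) n P Q"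
    unfolding xi_SG_def by (rule xi_f_eq_Cf_xi_kernel[OF Q_nonzero])
  have xi_h: "xi_h n P Q = Cf (xi_kernel f_h) n P Q"
    unfolding xi_h_def by (rule xi_f_eq_Cf_xi_kernel[OF Q_nonzero])
  show ?thesis
    unfolding M_SG_def hel_def xi_SG xi_h
    using f_SG_bounds xi_kernel_f_SG_bounds P Q
    by (intro conjI Cf_nonneg Cf_le_scaled) auto
qed

end
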